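(* Let $a\ge2$, $d\ge1$ and $s$ be integers with $\gcd(a,d)=1$ and $1\le s<a$. Let $\mathit{NR}$ be the set of positive integers not representable as $\sum_{i=0}^s(a+id)x_i$ with $x_0,\dots,x_s$ nonnegative integers, and let $S_m=\sum_{n\in\mathit{NR}}n^m$. Then for every integer $m\ge1$, \[ mS_{m-1}=a^{m-1}\sum_{n=0}^{a-1}B_m\!\left(\lceil n/s\rceil+\frac{nd}{a}\right)-B_m . \]
   Context: $B_m(x)$ denotes the Bernoulli polynomials, defined by $\frac{te^{tx}}{e^t-1}=\sum_{m\ge0}B_m(x)\frac{t^m}{m!}$, and $B_m=B_m(0)$. $\lceil x\rceil$ is the least integer not less than $x$. *)

theory Defs
  imports Complex_Main "HOL-Computational_Algebra.Formal_Power_Series"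
begin

definition bernpoly :: "nat \<Rightarrow> real \<Rightarrow> real" where
  "bernpoly m x = fact m * fps_nth (fps_X * fps_exp x / (fps_exp 1 - 1)) m"

definition bernoulli_num :: "nat \<Rightarrow> real" where
  "bernoulli_num m = bernpoly m 0"

definition NR :: "nat \<Rightarrow> nat \<Rightarrow> nat \<Rightarrow> nat set" where
  "NR a d s = {n. 0 < n \<and> \<not> (\<exists>x :: nat \<Rightarrow> nat. n = (\<Sum>i = 0..s. (a + i * d) * x i))}"

definition powsumNR :: "nat \<Rightarrow> nat \<Rightarrow> nat \<Rightarrow> nat \<Rightarrow> real" where
  "powsumNR a d s m = (\<Sum>n\<in>NR a d s. real n ^ m)"

end

(*
  Representations by a, a + d, ..., a + s d are exactly the numbers K a + J d with J \<le> s K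
  (K counts the summands, J is their total weight). As gcd(a, d) = 1, the residues j d mod a,
  j < a, run through all classes mod a, and the least representable number in the class of
  j d is \<lceil>j/s\<rceil> a + j d. Hence the non-representable numbers of that class form the
  progression (j d mod a) + t a, t < \<lceil>j/s\<rceil> + \<lfloor>j d/a\<rfloor>. Summing n^(m-1) over such a
  progression telescopes by B_m(x + 1) - B_m(x) = m x^(m-1); the contributions of the lower ends
  are the values B_m(r/a), r < a, which Raabe's multiplication formula sums to a^(1-m) B_m.
*)

theory Submission
  imports Defs "HOL-Number_Theory.Cong"
begin

unbundle fps_syntax

definition bernpoly_egf :: "real \<Rightarrow> real fps" where
  "bernpoly_egf x = fps_X * fps_exp x / (fps_exp 1 - 1)"

lemma bernpoly_eq_fact_mult_egf_nth: "bernpoly m x = fact m * bernpoly_egf x $ m"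
  by (simp add: bernpoly_def bernpoly_egf_def)

lemma fps_exp_minus_1_nonzero:
  assumes "c \<noteq> 0"
  shows "fps_exp c - 1 \<noteq> (0 :: 'a :: field_char_0 fps)"
proof
  assume "fps_exp c - 1 = 0"
  then have "(fps_exp c - 1) $ 1 = 0" by simp
  with assms show False by simp
qed

lemma bernpoly_egf_times: "bernpoly_egf x * (fps_exp 1 - 1) = fps_X * fps_exp x"
proof -
  have "subdegree (fps_exp (1::real) - 1) = 1" "subdegree (fps_X * fps_exp x) = 1"
    by (rule subdegreeI; simp)+
  then show ?thesis
    unfolding bernpoly_egf_def
    using fps_times_divide_eq[OF fps_exp_minus_1_nonzero[of "1::real"], of "fps_X * fps_exp x"]
    by simp
qed

lemma bernpoly_egf_diff: "bernpoly_egf (x + 1) - bernpoly_egf x = fps_X * fps_exp x"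
proof -
  have "(bernpoly_egf (x + 1) - bernpoly_egf x) * (fps_exp 1 - 1)
      = fps_X * fps_exp (x + 1) - fps_X * fps_exp x"
    by (simp add: left_diff_distrib bernpoly_egf_times)
  also have "\<dots> = fps_X * fps_exp x * (fps_exp 1 - 1)"
    by (simp add: fps_exp_add_mult algebra_simps)
  finally show ?thesis
    using fps_exp_minus_1_nonzero[of "1::real"] by simp
qed

lemma bernpoly_Suc_diff:
  "bernpoly (Suc m) (x + 1) - bernpoly (Suc m) x = real (Suc m) * x ^ m"
proof -
  have "bernpoly (Suc m) (x + 1) - bernpoly (Suc m) x
      = fact (Suc m) * (bernpoly_egf (x + 1) - bernpoly_egf x) $ Suc m"
    by (simp add: bernpoly_eq_fact_mult_egf_nth algebra_simps)
  also have "\<dots> = real (Suc m) * x ^ m"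
    by (simp add: bernpoly_egf_diff)
  finally show ?thesis .
qed

lemma sum_powers_eq_bernpoly_diff:
  "real (Suc m) * (\<Sum>t<K. (x + real t) ^ m)
    = bernpoly (Suc m) (x + real K) - bernpoly (Suc m) x"
proof (induction K)
  case (Suc K)
  then show ?case
    using bernpoly_Suc_diff[of m "x + real K"] by (simp add: algebra_simps)
qed simp

lemma sum_powers_arith_prog_eq_bernpoly_diff:
  assumes "0 < a"
  shows "real (Suc m) * (\<Sum>t<K. real (b + t * a) ^ m)
    = real a ^ m * (bernpoly (Suc m) (real b / real a + real K)
        - bernpoly (Suc m) (real b / real a))"
proof -
  have "real (b + t * a) ^ m = real a ^ m * (real b / real a + real t) ^ m" for t
    using assms by (simp add: field_simps flip: power_mult_distrib)
  then show ?thesis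
    by (simp add: sum_distrib_left mult.left_commute flip: sum_powers_eq_bernpoly_diff)
qed

lemma fps_exp_geometric_sum:
  "(\<Sum>r<n. fps_exp (of_nat r * y)) * (fps_exp y - 1)
    = fps_exp (of_nat n * y) - (1 :: 'a :: field_char_0 fps)"
  by (induction n) (simp_all add: algebra_simps flip: fps_exp_add_mult)

lemma bernpoly_multiplication_formula:
  assumes "0 < a"
  shows "real a ^ m * (\<Sum>r<a. bernpoly m (x + real r / real a)) = real a * bernpoly m (real a * x)"
proof -
  define y where "y = 1 / real a"
  have ay: "real a * y = 1"
    using assms by (simp add: y_def)
  then have ayx: "y * (real a * x) = x"
    by (metis mult.assoc mult.commute mult_1)
  define S where "S = (\<Sum>r<a. bernpoly_egf (x + real r * y))"
  \<comment> \<open>C is the generating function of the B_m(a x) with t scaled to t/a; both S and a C are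
    t e^(x t) / (e^(t/a) - 1), for S by the geometric sum over r.\<close>
  define C where "C = bernpoly_egf (real a * x) oo (fps_const y * fps_X)"
  have S_times: "S * (fps_exp 1 - 1) = fps_X * fps_exp x * (\<Sum>r<a. fps_exp (real r * y))"
    by (simp add: S_def sum_distrib_left sum_distrib_right bernpoly_egf_times fps_exp_add_mult
        mult.assoc)
  have "S * (fps_exp y - 1) * (fps_exp 1 - 1) = S * (fps_exp 1 - 1) * (fps_exp y - 1)"
    by (simp only: ac_simps)
  also have "\<dots> = fps_X * fps_exp x * ((\<Sum>r<a. fps_exp (real r * y)) * (fps_exp y - 1))"
    by (simp only: S_times mult.assoc)
  also have "\<dots> = fps_X * fps_exp x * (fps_exp 1 - 1)"
    by (simp add: fps_exp_geometric_sum ay)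
  finally have S: "S * (fps_exp y - 1) = fps_X * fps_exp x"
    using fps_exp_minus_1_nonzero[of "1::real"] by simp
  have C_times: "C * (fps_exp y - 1) = fps_const y * fps_X * fps_exp x"
    using arg_cong[OF bernpoly_egf_times[of "real a * x"], of "\<lambda>f. f oo (fps_const y * fps_X)"] ayx
    by (simp add: C_def fps_compose_mult_distrib fps_compose_sub_distrib mult.assoc)
  have "fps_const (real a) * C * (fps_exp y - 1)
      = fps_const (real a) * fps_const y * fps_X * fps_exp x"
    by (simp only: C_times mult.assoc)
  also have "\<dots> = S * (fps_exp y - 1)"
    by (simp add: ay S)
  finally have S_eq: "S = fps_const (real a) * C"
    using fps_exp_minus_1_nonzero[of y] ay by auto
  have "(\<Sum>r<a. bernpoly m (x + real r / real a)) = fact m * S $ m"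
    by (simp add: S_def y_def bernpoly_eq_fact_mult_egf_nth fps_sum_nth sum_distrib_left)
  also have "\<dots> = real a * y ^ m * bernpoly m (real a * x)"
    by (simp add: S_eq C_def bernpoly_eq_fact_mult_egf_nth)
  finally show ?thesis
    by (simp add: ay flip: power_mult_distrib)
qed

definition representable :: "nat \<Rightarrow> nat \<Rightarrow> nat \<Rightarrow> nat \<Rightarrow> bool" where
  "representable a d s n \<longleftrightarrow> (\<exists>x :: nat \<Rightarrow> nat. n = (\<Sum>i = 0..s. (a + i * d) * x i))"

lemma NR_eq_not_representable: "NR a d s = {n. \<not> representable a d s n}"
proof -
  have "representable a d s 0"
    unfolding representable_def by (intro exI[of _ "\<lambda>_. 0"]) simp
  moreover have "NR a d s = {n. 0 < n \<and> \<not> representable a d s n}"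
    unfolding NR_def representable_def ..
  ultimately show ?thesis
    by (auto intro: gr0I)
qed

lemma exists_count_and_weight:
  assumes "J \<le> s * K"
  shows "\<exists>x :: nat \<Rightarrow> nat. (\<Sum>i = 0..s. x i) = K \<and> (\<Sum>i = 0..s. i * x i) = J"
  using assms
proof (induction K arbitrary: J)
  case 0
  then show ?case by (intro exI[of _ "\<lambda>_. 0"]) simp
next
  case (Suc K)
  define e where "e = min J s"
  have "J - e \<le> s * K"
    using Suc.prems by (auto simp: e_def)
  then obtain x where x: "(\<Sum>i = 0..s. x i) = K" "(\<Sum>i = 0..s. i * x i) = J - e"
    using Suc.IH by blast
  have e: "e \<in> {0..s}" "e \<le> J"
    by (auto simp: e_def)
  let ?x' = "\<lambda>i. x i + (if i = e then 1 else 0)"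
  have "(\<Sum>i = 0..s. ?x' i) = Suc K"
    using x e by (simp add: sum.distrib)
  moreover have "(\<Sum>i = 0..s. i * ?x' i) = (\<Sum>i = 0..s. i * x i + (if i = e then e else 0))"
    by (rule sum.cong) auto
  moreover have "\<dots> = J"
    using x e by (simp add: sum.distrib)
  ultimately show ?case
    by (intro exI[of _ ?x']) simp
qed

lemma representable_iff:
  "representable a d s n \<longleftrightarrow> (\<exists>K J. J \<le> s * K \<and> n = K * a + J * d)"
proof -
  have split: "(\<Sum>i = 0..s. (a + i * d) * x i) = (\<Sum>i = 0..s. x i) * a + (\<Sum>i = 0..s. i * x i) * d"
    for x :: "nat \<Rightarrow> nat"
  proof -
    have "(\<Sum>i = 0..s. (a + i * d) * x i) = (\<Sum>i = 0..s. a * x i) + (\<Sum>i = 0..s. d * (i * x i))"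
      by (simp add: sum.distrib algebra_simps)
    then show ?thesis
      by (simp add: mult.commute flip: sum_distrib_left)
  qed
  have weight_le: "(\<Sum>i = 0..s. i * x i) \<le> s * (\<Sum>i = 0..s. x i)" for x :: "nat \<Rightarrow> nat"
    unfolding sum_distrib_left by (rule sum_mono) simp
  show ?thesis
    unfolding representable_def split
  proof
    assume "\<exists>x. n = (\<Sum>i = 0..s. x i) * a + (\<Sum>i = 0..s. i * x i) * d"
    then show "\<exists>K J. J \<le> s * K \<and> n = K * a + J * d"
      using weight_le by blast
  next
    assume "\<exists>K J. J \<le> s * K \<and> n = K * a + J * d"
    then obtain K J where "J \<le> s * K" "n = K * a + J * d"
      by blast
    with exists_count_and_weight[of J s K]
    show "\<exists>x. n = (\<Sum>i = 0..s. x i) * a + (\<Sum>i = 0..s. i * x i) * d"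
      by metis
  qed
qed

lemma ceiling_div_le_iff:
  fixes j s K :: nat
  assumes "0 < s"
  shows "(j + s - 1) div s \<le> K \<longleftrightarrow> j \<le> s * K"
proof -
  have "(j + s - 1) div s \<le> K \<longleftrightarrow> j + s - 1 < Suc K * s"
    using div_less_iff_less_mult[OF assms, of "j + s - 1" "Suc K"] by (simp add: less_Suc_eq_le)
  also have "\<dots> \<longleftrightarrow> j \<le> s * K"
    using assms by (simp add: mult.commute) arith
  finally show ?thesis .
qed

lemma ceiling_divide_nat_eq:
  fixes j s :: nat
  assumes "0 < s"
  shows "\<lceil>real j / real s\<rceil> = int ((j + s - 1) div s)"
proof (rule ceiling_unique)
  let ?c = "(j + s - 1) div s"
  have "j \<le> s * ?c"
    using ceiling_div_le_iff[OF assms] by blast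
  then show "real j / real s \<le> real_of_int (int ?c)"
    using assms by (simp add: divide_le_eq mult.commute flip: of_nat_mult)
  have "?c * s \<le> j + s - 1"
    by (rule div_times_less_eq_dividend)
  then have "?c * s < j + s"
    using assms by linarith
  then have "real ?c * real s < real j + real s"
    by (metis of_nat_add of_nat_less_iff of_nat_mult)
  then show "real_of_int (int ?c) - 1 < real j / real s"
    using assms by (simp add: field_simps)
qed

lemma mult_mod_eq_iff_mod_eq:
  fixes a d i j :: nat
  assumes "coprime d a"
  shows "i * d mod a = j * d mod a \<longleftrightarrow> i mod a = j mod a"
  using cong_mult_rcancel_nat[OF assms] unfolding cong_def .

lemma bij_betw_mult_mod:
  fixes a d :: nat
  assumes "coprime d a"
  shows "bij_betw (\<lambda>j. j * d mod a) {..<a} {..<a}"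
proof -
  have inj: "inj_on (\<lambda>j. j * d mod a) {..<a}"
    by (rule inj_onI) (simp add: mult_mod_eq_iff_mod_eq[OF assms])
  then have "(\<lambda>j. j * d mod a) ` {..<a} = {..<a}"
    by (intro endo_inj_surj) auto
  with inj show ?thesis
    by (simp add: bij_betw_def)
qed

lemma representable_iff_ge_least_in_class:
  fixes a d s j n :: nat
  assumes "0 < s" "coprime d a" "j < a" "n mod a = j * d mod a"
  shows "representable a d s n \<longleftrightarrow> (j + s - 1) div s * a + j * d \<le> n"
proof
  assume "representable a d s n"
  then obtain K J where KJ: "J \<le> s * K" "n = K * a + J * d"
    by (auto simp: representable_iff)
  have "J * d mod a = j * d mod a"
    using KJ(2) assms(4) by simp
  then have "J mod a = j"
    using mult_mod_eq_iff_mod_eq[OF assms(2)] assms(3) by simp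
  then have "j \<le> J"
    by (metis mod_less_eq_dividend)
  with KJ(1) have "(j + s - 1) div s \<le> K"
    using ceiling_div_le_iff[OF assms(1)] by simp
  with \<open>j \<le> J\<close> show "(j + s - 1) div s * a + j * d \<le> n"
    unfolding KJ(2) by (intro add_mono mult_le_mono) auto
next
  let ?c = "(j + s - 1) div s"
  assume le: "?c * a + j * d \<le> n"
  moreover have "(?c * a + j * d) mod a = n mod a"
    using assms(4) by simp
  ultimately obtain e where e: "n = ?c * a + j * d + a * e"
    by (metis mod_eq_dvd_iff_nat dvd_def le_add_diff_inverse)
  have "j \<le> s * ?c"
    using ceiling_div_le_iff[OF assms(1)] by blast
  then have "j \<le> s * (?c + e)"
    by (simp add: add_mult_distrib2 le_add1 trans_le_add1)
  moreover have "n = (?c + e) * a + j * d"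
    using e by (simp add: algebra_simps)
  ultimately show "representable a d s n"
    unfolding representable_iff by blast
qed

lemma NR_in_class_iff:
  fixes a d s j n :: nat
  assumes "0 < s" "coprime d a" "j < a" "n mod a = j * d mod a"
  shows "n \<in> NR a d s \<longleftrightarrow> n div a < (j + s - 1) div s + j * d div a"
proof -
  let ?L = "(j + s - 1) div s + j * d div a"
  have "(j + s - 1) div s * a + j * d = ?L * a + n mod a"
    using assms(4) div_mult_mod_eq[of "j * d" a] by (simp add: algebra_simps)
  then have "\<not> representable a d s n \<longleftrightarrow> n < ?L * a + n mod a"
    using representable_iff_ge_least_in_class[OF assms] by (simp add: not_le)
  also have "\<dots> \<longleftrightarrow> n div a * a < ?L * a"
    using div_mult_mod_eq[of n a] by arith
  also have "\<dots> \<longleftrightarrow> n div a < ?L"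
    using assms(3) by simp
  finally show ?thesis
    by (simp add: NR_eq_not_representable)
qed

lemma NR_eq_UN_progressions:
  fixes a d s :: nat
  assumes "0 < s" "coprime d a" "0 < a"
  shows "NR a d s = (\<Union>j<a. (\<lambda>t. j * d mod a + t * a) ` {..<(j + s - 1) div s + j * d div a})"
    (is "_ = ?U")
proof (intro equalityI subsetI)
  fix n
  assume n: "n \<in> NR a d s"
  have "n mod a \<in> (\<lambda>j. j * d mod a) ` {..<a}"
    using bij_betw_mult_mod[OF assms(2)] assms(3) by (simp add: bij_betw_def)
  then obtain j where j: "j < a" "n mod a = j * d mod a"
    by auto
  then have "n div a < (j + s - 1) div s + j * d div a"
    using NR_in_class_iff[OF assms(1,2) j] n by simp
  moreover have "n = j * d mod a + n div a * a"
    using j(2) by (metis add.commute div_mult_mod_eq)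
  ultimately show "n \<in> ?U"
    using j(1) by blast
next
  fix n
  assume "n \<in> ?U"
  then obtain j t where jt: "j < a" "t < (j + s - 1) div s + j * d div a" "n = j * d mod a + t * a"
    by blast
  then have "n mod a = j * d mod a" "n div a = t"
    using assms(3) by simp_all
  with jt show "n \<in> NR a d s"
    using NR_in_class_iff[OF assms(1,2)] by simp
qed

lemma powsumNR_eq_sum_progressions:
  fixes a d s k :: nat
  assumes "0 < s" "coprime d a" "0 < a"
  shows "powsumNR a d s k
    = (\<Sum>j<a. \<Sum>t<(j + s - 1) div s + j * d div a. real (j * d mod a + t * a) ^ k)"
proof -
  have inj: "inj_on (\<lambda>t. r + t * a) A" for r A
    using assms(3) by (auto intro: inj_onI)
  have "(\<lambda>t. i * d mod a + t * a) ` A \<inter> (\<lambda>t. j * d mod a + t * a) ` B = {}"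
    if "i < a" "j < a" "i \<noteq> j" for i j A B
    using that mult_mod_eq_iff_mod_eq[OF assms(2), of i j] assms(3)
    by (auto dest: arg_cong[where f = "\<lambda>n. n mod a"])
  then show ?thesis
    unfolding powsumNR_def NR_eq_UN_progressions[OF assms]
    by (subst sum.UNION_disjoint) (auto simp: sum.reindex[OF inj])
qed

lemma sum_bernpoly_mult_mod_residues:
  fixes a d :: nat
  assumes "coprime d a" "0 < a"
  shows "real a ^ m * (\<Sum>j<a. bernpoly (Suc m) (real (j * d mod a) / real a))
    = bernoulli_num (Suc m)"
proof -
  have "(\<Sum>j<a. bernpoly (Suc m) (real (j * d mod a) / real a))
      = (\<Sum>r<a. bernpoly (Suc m) (real r / real a))"
    using sum.reindex_bij_betw[OF bij_betw_mult_mod[OF assms(1)]] .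
  then show ?thesis
    using bernpoly_multiplication_formula[OF assms(2), of "Suc m" 0] assms(2)
    by (simp add: bernoulli_num_def)
qed

lemma sum_powers_NR_class:
  fixes a d s j k :: nat
  assumes "0 < s" "0 < a"
  shows "real (Suc k) * (\<Sum>t<(j + s - 1) div s + j * d div a. real (j * d mod a + t * a) ^ k)
    = real a ^ k * (bernpoly (Suc k) (real_of_int \<lceil>real j / real s\<rceil> + real j * real d / real a)
        - bernpoly (Suc k) (real (j * d mod a) / real a))"
proof -
  have "real j * real d = real (j * d div a) * real a + real (j * d mod a)"
    by (metis div_mult_mod_eq of_nat_add of_nat_mult)
  then have "real (j * d mod a) / real a + real ((j + s - 1) div s + j * d div a)
      = real_of_int \<lceil>real j / real s\<rceil> + real j * real d / real a"
    using assms by (simp add: ceiling_divide_nat_eq field_simps)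
  then show ?thesis
    using sum_powers_arith_prog_eq_bernpoly_diff[OF assms(2)] by simp
qed

theorem mainTheorem3:
  fixes a d s m :: nat
  assumes "a \<ge> 2" and "d \<ge> 1" and "gcd a d = 1" and "1 \<le> s" and "s < a" and "m \<ge> 1"
  shows "real m * powsumNR a d s (m - 1) =
    real a ^ (m - 1) * (\<Sum>n = 0..a - 1.
        bernpoly m (real_of_int \<lceil>real n / real s\<rceil> + real n * real d / real a))
    - bernoulli_num m"
proof -
  obtain k where m: "m = Suc k"
    using \<open>m \<ge> 1\<close> by (cases m) auto
  have a: "0 < a" and s: "0 < s"
    using assms by auto
  have cop: "coprime d a"
    using \<open>gcd a d = 1\<close> by (simp add: coprime_iff_gcd_eq_1 gcd.commute)
  let ?B = "\<lambda>j. bernpoly m (real_of_int \<lceil>real j / real s\<rceil> + real j * real d / real a)"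
  have "real m * powsumNR a d s (m - 1)
      = (\<Sum>j<a. real a ^ k * (?B j - bernpoly m (real (j * d mod a) / real a)))"
    unfolding m diff_Suc_1 powsumNR_eq_sum_progressions[OF s cop a]
    by (subst sum_distrib_left) (simp only: sum_powers_NR_class[OF s a])
  also have "\<dots> = real a ^ k * (\<Sum>j<a. ?B j) - bernoulli_num m"
    using sum_bernpoly_mult_mod_residues[OF cop a, of k]
    by (simp add: m sum_subtractf right_diff_distrib sum_distrib_left)
  also have "{..<a} = {0..a - 1}"
    using a by auto
  finally show ?thesis
    by (simp add: m)
qed

end
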